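(* Let $\mathcal{G}=(\mathcal{V},\mathcal{E},\mathcal{W})$ be a connected, simple, undirected graph with vertex set $\mathcal{V}=\{1,\dots,n\}$, edge set $\mathcal{E}=\{e_1,\dots,e_m\}$ and positive edge weights $w_1,\dots,w_m$, each edge being given an arbitrary but fixed orientation. Let $D$ be its $n\times m$ incidence matrix, $W=\mathrm{diag}(w_1,\dots,w_m)$, $Q=DW^{-1}$, and for two distinct vertices $s,t$ let $y=y^{(s,t)}\in\mathbb{R}^n$ be the vector with $y(s)=+1$, $y(t)=-1$ and all other entries $0$. Assume (Assumption A1) that for every vertex $v$, the shortest (minimum total weight) path between $s$ and $v$ is unique and the shortest path between $t$ and $v$ is unique. Then for every $\lambda>0$ the lasso problem $$\min_{\beta\in\mathbb{R}^m}\ \tfrac12\|y-Q\beta\|_2^2+\lambda\|\beta\|_1$$ has a unique solution.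
   Context: The incidence matrix $D$ has entries $[D]_{ij}=+1$ if vertex $i$ is the tail of edge $e_j$, $-1$ if vertex $i$ is the head of edge $e_j$, and $0$ otherwise. The length of a path is the sum of the weights of its edges. *)

theory Defs
  imports "HOL-Analysis.Analysis"
begin

definition simple_graph :: "('e \<Rightarrow> 'v) \<Rightarrow> ('e \<Rightarrow> 'v) \<Rightarrow> bool" where
  "simple_graph tail head \<longleftrightarrow>
     (\<forall>e. tail e \<noteq> head e) \<and>
     (\<forall>e e'. {tail e, head e} = {tail e', head e'} \<longrightarrow> e = e')"

definition adjacent :: "('e \<Rightarrow> 'v) \<Rightarrow> ('e \<Rightarrow> 'v) \<Rightarrow> 'v \<Rightarrow> 'v \<Rightarrow> bool" where
  "adjacent tail head u v \<longleftrightarrow> (\<exists>e. {tail e, head e} = {u, v})"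

definition is_path :: "('e \<Rightarrow> 'v) \<Rightarrow> ('e \<Rightarrow> 'v) \<Rightarrow> 'v \<Rightarrow> 'v \<Rightarrow> 'v list \<Rightarrow> bool" where
  "is_path tail head u v p \<longleftrightarrow>
     p \<noteq> [] \<and> hd p = u \<and> last p = v \<and> distinct p \<and>
     (\<forall>i < length p - 1. adjacent tail head (p ! i) (p ! (i + 1)))"

text \<open>The edge joining two adjacent vertices (unique in a simple graph).\<close>
definition edge_between :: "('e \<Rightarrow> 'v) \<Rightarrow> ('e \<Rightarrow> 'v) \<Rightarrow> 'v \<Rightarrow> 'v \<Rightarrow> 'e" where
  "edge_between tail head u v = (THE e. {tail e, head e} = {u, v})"

definition path_length :: "('e \<Rightarrow> 'v) \<Rightarrow> ('e \<Rightarrow> 'v) \<Rightarrow> ('e \<Rightarrow> real) \<Rightarrow> 'v list \<Rightarrow> real" where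
  "path_length tail head w p =
     (\<Sum>i < length p - 1. w (edge_between tail head (p ! i) (p ! (i + 1))))"

definition connected_graph :: "('e \<Rightarrow> 'v) \<Rightarrow> ('e \<Rightarrow> 'v) \<Rightarrow> bool" where
  "connected_graph tail head \<longleftrightarrow> (\<forall>u v. \<exists>p. is_path tail head u v p)"

definition unique_shortest_path :: "('e \<Rightarrow> 'v) \<Rightarrow> ('e \<Rightarrow> 'v) \<Rightarrow> ('e \<Rightarrow> real) \<Rightarrow> 'v \<Rightarrow> 'v \<Rightarrow> bool" where
  "unique_shortest_path tail head w u v \<longleftrightarrow>
     (\<exists>!p. is_path tail head u v p \<and>
           (\<forall>q. is_path tail head u v q \<longrightarrow> path_length tail head w p \<le> path_length tail head w q))"

definition incidence :: "('e::finite \<Rightarrow> 'v::finite) \<Rightarrow> ('e \<Rightarrow> 'v) \<Rightarrow> real^'e^'v" where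
  "incidence tail head = (\<chi> i j. if i = tail j then 1 else if i = head j then -1 else 0)"

definition weight_matrix :: "('e::finite \<Rightarrow> real) \<Rightarrow> real^'e^'e" where
  "weight_matrix w = (\<chi> i j. if i = j then w j else 0)"

definition st_vector :: "'v::finite \<Rightarrow> 'v \<Rightarrow> real^'v" where
  "st_vector s t = (\<chi> i. if i = s then 1 else if i = t then -1 else 0)"

definition lasso_obj :: "real^'v::finite \<Rightarrow> real^'e::finite^'v \<Rightarrow> real \<Rightarrow> real^'e \<Rightarrow> real" where
  "lasso_obj y Q lam \<beta> = 1/2 * (norm (y - Q *v \<beta>))\<^sup>2 + lam * (\<Sum>j\<in>UNIV. \<bar>\<beta> $ j\<bar>)"

end

theory Submission
  imports Defs
begin

text \<open>Write \<open>\<beta> = W \<gamma>\<close>, so that \<open>Q \<beta> = D \<gamma>\<close> is the net outflow of the edge flow \<open>\<gamma>\<close>.  At a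
  minimizer the optimality conditions say that the scaled residual \<open>p = (y - Q \<beta>) / lam\<close> changes by
  at most \<open>w e\<close> along every edge \<open>e\<close>, by exactly \<open>w e\<close> downhill along every edge carrying flow,
  and that the net outflow of \<open>\<gamma>\<close> at \<open>v\<close> is \<open>y v - lam p v\<close>.  Strict convexity of the quadratic
  part gives all minimizers the same residual, hence the same \<open>p\<close>.  Tracing flow backwards from a
  vertex with \<open>p \<ge> 0\<close> climbs along tight edges to \<open>s\<close>, so every edge carrying flow lies on a tight,
  hence shortest, path from \<open>s\<close>, or symmetrically from \<open>t\<close>.  Two different minimizers differ by a
  circulation, whose support has minimum degree two; by uniqueness of shortest paths its edges
  would form part of two shortest-path trees, and counting at a vertex of largest \<open>p\<close> shows
  that no such edge set exists.\<close>

definition lasso_minimizer :: "real^'v::finite \<Rightarrow> real^'e::finite^'v \<Rightarrow> real \<Rightarrow> real^'e \<Rightarrow> bool" where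
  "lasso_minimizer y Q lam \<beta> \<longleftrightarrow> (\<forall>\<beta>'. lasso_obj y Q lam \<beta> \<le> lasso_obj y Q lam \<beta>')"

lemma nonneg_if_nonneg_near_zero:
  fixes a k \<epsilon> :: real
  assumes "k \<ge> 0" and "\<epsilon> > 0" and nonneg: "\<And>s. 0 < s \<Longrightarrow> s < \<epsilon> \<Longrightarrow> 0 \<le> s * a + s\<^sup>2 * k"
  shows "0 \<le> a"
proof (rule ccontr)
  assume "\<not> 0 \<le> a"
  define s where "s = min (\<epsilon> / 2) (- a / (k + 1))"
  have "0 < s" "s < \<epsilon>" using \<open>\<not> 0 \<le> a\<close> assms(1,2) by (auto simp: s_def divide_neg_pos)
  have "s \<le> - a / (k + 1)" by (simp add: s_def)
  then have "s * (k + 1) \<le> - a" using assms(1) by (simp add: field_simps)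
  then have "a + s * k < 0" using \<open>0 < s\<close> by (simp add: algebra_simps)
  then have "s * (a + s * k) < 0" using \<open>0 < s\<close> by (simp add: mult_pos_neg)
  then show False using nonneg[OF \<open>0 < s\<close> \<open>s < \<epsilon>\<close>] by (simp add: algebra_simps power2_eq_square)
qed

lemma scalar_lasso_optimality_upper:
  fixes lam b c k :: real
  assumes "k \<ge> 0" and opt: "\<And>t. 0 \<le> lam * (\<bar>b + t\<bar> - \<bar>b\<bar>) - t * c + t\<^sup>2 * k"
  shows "b \<ge> 0 \<Longrightarrow> c \<le> lam" and "b > 0 \<Longrightarrow> lam \<le> c"
proof -
  assume "b \<ge> 0"
  have "0 \<le> lam - c"
  proof (rule nonneg_if_nonneg_near_zero[OF \<open>k \<ge> 0\<close>, of 1])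
    fix s :: real assume "0 < s"
    then show "0 \<le> s * (lam - c) + s\<^sup>2 * k" using opt[of s] \<open>b \<ge> 0\<close> by (simp add: algebra_simps)
  qed simp
  then show "c \<le> lam" by simp
next
  assume "b > 0"
  have "0 \<le> c - lam"
  proof (rule nonneg_if_nonneg_near_zero[OF \<open>k \<ge> 0\<close> \<open>b > 0\<close>])
    fix s :: real assume "0 < s" "s < b"
    then show "0 \<le> s * (c - lam) + s\<^sup>2 * k" using opt[of "- s"] by (simp add: algebra_simps)
  qed
  then show "lam \<le> c" by simp
qed

lemma scalar_lasso_optimality:
  fixes lam b c k :: real
  assumes "lam \<ge> 0" and "k \<ge> 0" and opt: "\<And>t. 0 \<le> lam * (\<bar>b + t\<bar> - \<bar>b\<bar>) - t * c + t\<^sup>2 * k"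
  shows "\<bar>c\<bar> \<le> lam \<and> (b \<noteq> 0 \<longrightarrow> c = lam * sgn b)"
proof -
  have opt': "0 \<le> lam * (\<bar>- b + t\<bar> - \<bar>- b\<bar>) - t * (- c) + t\<^sup>2 * k" for t
    using opt[of "- t"] by (simp add: abs_minus_commute)
  note upper = scalar_lasso_optimality_upper[OF \<open>k \<ge> 0\<close> opt]
    and lower = scalar_lasso_optimality_upper[OF \<open>k \<ge> 0\<close> opt']
  show ?thesis
    using upper lower \<open>lam \<ge> 0\<close> by (cases b "0 :: real" rule: linorder_cases) (auto simp: abs_le_iff)
qed

lemma lasso_obj_add_axis:
  fixes Q :: "real^'e::finite^'v::finite"
  shows "lasso_obj y Q lam (\<beta> + t *\<^sub>R axis j 1) = lasso_obj y Q lam \<beta>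
     - t * ((y - Q *v \<beta>) \<bullet> column j Q) + t\<^sup>2 / 2 * (norm (column j Q))\<^sup>2
     + lam * (\<bar>\<beta> $ j + t\<bar> - \<bar>\<beta> $ j\<bar>)"
proof -
  let ?r = "y - Q *v \<beta>" and ?q = "column j Q"
  have residual: "y - Q *v (\<beta> + t *\<^sub>R axis j 1) = ?r - t *\<^sub>R ?q"
    by (simp add: matrix_vector_right_distrib matrix_vector_mult_scaleR matrix_vector_mult_basis)
  have quad: "(norm (?r - t *\<^sub>R ?q))\<^sup>2 = (norm ?r)\<^sup>2 - 2 * t * (?r \<bullet> ?q) + t\<^sup>2 * (norm ?q)\<^sup>2"
    unfolding power2_norm_eq_inner
    by (simp add: inner_diff_left inner_diff_right inner_commute algebra_simps power2_eq_square)
  have "(\<Sum>i\<in>UNIV. \<bar>(\<beta> + t *\<^sub>R axis j 1) $ i\<bar>)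
      = (\<Sum>i\<in>UNIV. \<bar>\<beta> $ i\<bar> + (if i = j then \<bar>\<beta> $ j + t\<bar> - \<bar>\<beta> $ j\<bar> else 0))"
    by (rule sum.cong) (auto simp: axis_def)
  then have l1: "(\<Sum>i\<in>UNIV. \<bar>(\<beta> + t *\<^sub>R axis j 1) $ i\<bar>)
      = (\<Sum>i\<in>UNIV. \<bar>\<beta> $ i\<bar>) + (\<bar>\<beta> $ j + t\<bar> - \<bar>\<beta> $ j\<bar>)"
    by (simp add: sum.distrib)
  show ?thesis
    unfolding lasso_obj_def residual quad l1 by (simp add: algebra_simps)
qed

lemma lasso_minimizer_optimality:
  fixes Q :: "real^'e::finite^'v::finite" and j :: 'e
  assumes "lam \<ge> 0" and "lasso_minimizer y Q lam \<beta>"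
  defines "c \<equiv> (y - Q *v \<beta>) \<bullet> column j Q"
  shows "\<bar>c\<bar> \<le> lam \<and> (\<beta> $ j \<noteq> 0 \<longrightarrow> c = lam * sgn (\<beta> $ j))"
proof (rule scalar_lasso_optimality[OF \<open>lam \<ge> 0\<close>])
  show "0 \<le> (norm (column j Q))\<^sup>2 / 2" by simp
  fix t
  show "0 \<le> lam * (\<bar>\<beta> $ j + t\<bar> - \<bar>\<beta> $ j\<bar>) - t * c + t\<^sup>2 * ((norm (column j Q))\<^sup>2 / 2)"
    using assms(2)[unfolded lasso_minimizer_def, rule_format, of "\<beta> + t *\<^sub>R axis j 1"]
      lasso_obj_add_axis[of y Q lam \<beta> t j]
    unfolding c_def by simp
qed

lemma lasso_minimizer_exists:
  fixes Q :: "real^'e::finite^'v::finite"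
  assumes "lam > 0"
  shows "\<exists>\<beta>. lasso_minimizer y Q lam \<beta>"
proof -
  let ?f = "lasso_obj y Q lam"
  define R where "R = ?f 0 / lam"
  have "R \<ge> 0" unfolding R_def lasso_obj_def using assms by simp
  have "continuous_on (cball 0 R) ?f"
    unfolding lasso_obj_def by (intro continuous_intros linear_continuous_on matrix_vector_mul_bounded_linear)
  then obtain \<beta> where "\<beta> \<in> cball 0 R" and min_ball: "\<forall>\<beta>'\<in>cball 0 R. ?f \<beta> \<le> ?f \<beta>'"
    using continuous_attains_inf[OF compact_cball] \<open>R \<ge> 0\<close> by (metis cball_eq_empty not_less)
  have "?f \<beta> \<le> ?f \<beta>'" for \<beta>'
  proof (cases "\<beta>' \<in> cball 0 R")
    case False
    \<comment> \<open>outside the ball the penalty alone exceeds \<open>?f 0\<close>\<close>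
    have "?f \<beta> \<le> ?f 0" using min_ball \<open>R \<ge> 0\<close> by simp
    also have "\<dots> = lam * R" using assms by (simp add: R_def)
    also have "\<dots> \<le> lam * norm \<beta>'" using False assms by simp
    also have "\<dots> \<le> lam * (\<Sum>j\<in>UNIV. \<bar>\<beta>' $ j\<bar>)" using assms norm_le_l1_cart[of \<beta>'] by simp
    also have "\<dots> \<le> ?f \<beta>'" unfolding lasso_obj_def by simp
    finally show ?thesis .
  qed (use min_ball in auto)
  then show ?thesis unfolding lasso_minimizer_def by blast
qed

lemma lasso_minimizers_same_residual:
  fixes Q :: "real^'e::finite^'v::finite"
  assumes "lam \<ge> 0"
    and min1: "lasso_minimizer y Q lam \<beta>1" and min2: "lasso_minimizer y Q lam \<beta>2"
  shows "Q *v \<beta>1 = Q *v \<beta>2"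
proof -
  let ?f = "lasso_obj y Q lam" and ?l1 = "\<lambda>\<beta>::real^'e. \<Sum>j\<in>UNIV. \<bar>\<beta> $ j\<bar>"
  define r1 r2 where "r1 = y - Q *v \<beta>1" and "r2 = y - Q *v \<beta>2"
  define \<beta> where "\<beta> = (1/2) *\<^sub>R (\<beta>1 + \<beta>2)"
  \<comment> \<open>parallelogram law: the midpoint gains \<open>\<parallel>r1 - r2\<parallel>\<^sup>2/8\<close> over the average in the quadratic part\<close>
  have "y - Q *v \<beta> = (1/2) *\<^sub>R (r1 + r2)"
    unfolding \<beta>_def r1_def r2_def
    by (simp add: vec_eq_iff matrix_vector_right_distrib matrix_vector_mult_scaleR algebra_simps)
  then have quad: "(norm (y - Q *v \<beta>))\<^sup>2 = ((norm r1)\<^sup>2 + (norm r2)\<^sup>2) / 2 - (norm (r1 - r2))\<^sup>2 / 4"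
    unfolding power2_norm_eq_inner
    by (simp add: inner_add_left inner_add_right inner_diff_left inner_diff_right inner_commute
        algebra_simps) (simp add: field_simps)
  have "?l1 \<beta> \<le> (\<Sum>j\<in>UNIV. (\<bar>\<beta>1 $ j\<bar> + \<bar>\<beta>2 $ j\<bar>) / 2)"
    unfolding \<beta>_def by (intro sum_mono) (simp add: abs_triangle_ineq)
  also have "\<dots> = (?l1 \<beta>1 + ?l1 \<beta>2) / 2"
    by (simp add: sum.distrib flip: sum_divide_distrib)
  finally have "?l1 \<beta> \<le> (?l1 \<beta>1 + ?l1 \<beta>2) / 2" .
  then have "lam * ?l1 \<beta> \<le> (lam * ?l1 \<beta>1 + lam * ?l1 \<beta>2) / 2"
    using mult_left_mono[OF _ \<open>lam \<ge> 0\<close>] by (fastforce simp: algebra_simps)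
  then have "?f \<beta> \<le> (?f \<beta>1 + ?f \<beta>2) / 2 - (norm (r1 - r2))\<^sup>2 / 8"
    unfolding lasso_obj_def quad r1_def[symmetric] r2_def[symmetric] by (simp add: field_simps)
  moreover have "?f \<beta>1 \<le> ?f \<beta>" "?f \<beta>1 = ?f \<beta>2"
    using min1 min2 unfolding lasso_minimizer_def by (auto intro: order_antisym)
  ultimately have "(norm (r1 - r2))\<^sup>2 \<le> 0" by argo
  then show ?thesis by (simp add: r1_def r2_def)
qed

lemma card_endpoints_le_card_edges:
  fixes S :: "'e set" and hi lo :: "'e \<Rightarrow> 'v"
  assumes "finite S" and loopfree: "\<And>e. e \<in> S \<Longrightarrow> hi e \<noteq> lo e"
    and no_leaf: "\<And>e v. e \<in> S \<Longrightarrow> v \<in> {hi e, lo e} \<Longrightarrow> \<exists>e'\<in>S. e' \<noteq> e \<and> v \<in> {hi e', lo e'}"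
  shows "card (\<Union>e\<in>S. {hi e, lo e}) \<le> card S"
proof -
  let ?V = "\<Union>e\<in>S. {hi e, lo e}"
  let ?I = "SIGMA e:S. {hi e, lo e}"
  let ?J = "SIGMA v:?V. {e\<in>S. v \<in> {hi e, lo e}}"
  have "card ?I = (\<Sum>e\<in>S. card {hi e, lo e})"
    using \<open>finite S\<close> by (intro card_SigmaI) auto
  also have "\<dots> = 2 * card S"
    using loopfree by simp
  finally have card_I: "card ?I = 2 * card S" .
  have "?J = (\<lambda>(e, v). (v, e)) ` ?I" and "inj_on (\<lambda>(e, v). (v, e)) ?I"
    by (auto simp: inj_on_def)
  then have "card ?J = card ?I" by (simp add: card_image)
  moreover have "card ?J = (\<Sum>v\<in>?V. card {e\<in>S. v \<in> {hi e, lo e}})"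
    using \<open>finite S\<close> by (intro card_SigmaI) auto
  moreover have "(\<Sum>v\<in>?V. 2) \<le> (\<Sum>v\<in>?V. card {e\<in>S. v \<in> {hi e, lo e}})"
  proof (rule sum_mono)
    fix v assume "v \<in> ?V"
    then obtain e where e: "e \<in> S" "v \<in> {hi e, lo e}" by auto
    then obtain e' where e': "e' \<in> S" "e' \<noteq> e" "v \<in> {hi e', lo e'}" using no_leaf by blast
    have "card {e, e'} \<le> card {e\<in>S. v \<in> {hi e, lo e}}"
      using \<open>finite S\<close> e e' by (intro card_mono) auto
    then show "2 \<le> card {e\<in>S. v \<in> {hi e, lo e}}" using e' by simp
  qed
  ultimately show ?thesis using card_I by simp
qed

text \<open>Think of \<open>hi e\<close> and \<open>lo e\<close> as the upper and lower end of \<open>e\<close>, and of \<open>A\<close> and \<open>B\<close> as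
  membership in a tree growing downhill from one root and in a tree growing uphill from another;
  the map sends an edge to its endpoint away from the root of its tree.\<close>

lemma inj_on_child_end:
  fixes S :: "'e set" and hi lo :: "'e \<Rightarrow> 'v" and A B :: "'v \<Rightarrow> bool"
  assumes inj: "\<And>e e'. e \<in> S \<Longrightarrow> e' \<in> S \<Longrightarrow> hi e = hi e' \<Longrightarrow> lo e = lo e' \<Longrightarrow> e = e'"
    and covered: "\<And>e. e \<in> S \<Longrightarrow> A (hi e) \<or> B (lo e)"
    and A_descends: "\<And>e. e \<in> S \<Longrightarrow> A (hi e) \<Longrightarrow> A (lo e)"
    and A_parent: "\<And>e e'. e \<in> S \<Longrightarrow> e' \<in> S \<Longrightarrow> A (hi e) \<Longrightarrow> A (hi e') \<Longrightarrow> lo e = lo e' \<Longrightarrow> hi e = hi e'"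
    and B_child: "\<And>e e'. e \<in> S \<Longrightarrow> e' \<in> S \<Longrightarrow> B (lo e) \<Longrightarrow> B (lo e') \<Longrightarrow> hi e = hi e' \<Longrightarrow> lo e = lo e'"
  shows "inj_on (\<lambda>e. if A (hi e) then lo e else hi e) S"
proof (rule inj_onI)
  fix e e' assume e: "e \<in> S" and e': "e' \<in> S"
    and eq: "(if A (hi e) then lo e else hi e) = (if A (hi e') then lo e' else hi e')"
  consider "A (hi e)" "A (hi e')" "lo e = lo e'" | "\<not> A (hi e)" "\<not> A (hi e')" "hi e = hi e'"
    | "A (hi e)" "\<not> A (hi e')" "lo e = hi e'" | "\<not> A (hi e)" "A (hi e')" "hi e = lo e'"
    using eq by (auto split: if_splits)
  then show "e = e'"
  proof cases
    case 1
    then show ?thesis using inj A_parent e e' by blast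
  next
    case 2
    then have "B (lo e)" "B (lo e')" using covered[OF e] covered[OF e'] by auto
    then show ?thesis using inj B_child e e' 2 by blast
  qed (use A_descends[OF e] A_descends[OF e'] in auto)
qed

text \<open>At a highest vertex \<open>m\<close> the injection of \<open>inj_on_child_end\<close> either misses \<open>m\<close>,
  contradicting \<open>card V \<le> card S\<close>, or sends two edges ending in \<open>m\<close> to \<open>m\<close>.\<close>

lemma descending_edge_set_empty:
  fixes S :: "'e set" and hi lo :: "'e \<Rightarrow> 'v" and p :: "'v \<Rightarrow> 'a::linorder"
    and A B :: "'v \<Rightarrow> bool"
  assumes "finite S"
    and inj: "\<And>e e'. e \<in> S \<Longrightarrow> e' \<in> S \<Longrightarrow> hi e = hi e' \<Longrightarrow> lo e = lo e' \<Longrightarrow> e = e'"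
    and descend: "\<And>e. e \<in> S \<Longrightarrow> p (lo e) < p (hi e)"
    and no_leaf: "\<And>e v. e \<in> S \<Longrightarrow> v \<in> {hi e, lo e} \<Longrightarrow> \<exists>e'\<in>S. e' \<noteq> e \<and> v \<in> {hi e', lo e'}"
    and covered: "\<And>e. e \<in> S \<Longrightarrow> A (hi e) \<or> B (lo e)"
    and A_descends: "\<And>e. e \<in> S \<Longrightarrow> A (hi e) \<Longrightarrow> A (lo e)"
    and A_parent: "\<And>e e'. e \<in> S \<Longrightarrow> e' \<in> S \<Longrightarrow> A (hi e) \<Longrightarrow> A (hi e') \<Longrightarrow> lo e = lo e' \<Longrightarrow> hi e = hi e'"
    and B_child: "\<And>e e'. e \<in> S \<Longrightarrow> e' \<in> S \<Longrightarrow> B (lo e) \<Longrightarrow> B (lo e') \<Longrightarrow> hi e = hi e' \<Longrightarrow> lo e = lo e'"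
  shows "S = {}"
proof (rule ccontr)
  assume "S \<noteq> {}"
  let ?V = "\<Union>e\<in>S. {hi e, lo e}"
  define g where "g e = (if A (hi e) then lo e else hi e)" for e
  have inj_g: "inj_on g S"
    unfolding g_def using inj covered A_descends A_parent B_child by (rule inj_on_child_end)
  have "finite ?V" "?V \<noteq> {}" using \<open>finite S\<close> \<open>S \<noteq> {}\<close> by auto
  then have "Max (p ` ?V) \<in> p ` ?V" by (intro Max_in) auto
  then obtain m where m: "Max (p ` ?V) = p m" and "m \<in> ?V" by (rule imageE)
  have top: "p v \<le> p m" if "v \<in> ?V" for v
    unfolding m[symmetric] using \<open>finite ?V\<close> that by (intro Max_ge) auto
  have not_lo: "m \<noteq> lo e" if "e \<in> S" for e
  proof
    assume "m = lo e"
    moreover have "hi e \<in> ?V" using that by blast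
    ultimately show False using top descend[OF that] by fastforce
  qed
  obtain e where "e \<in> S" "m = hi e" using \<open>m \<in> ?V\<close> not_lo by blast
  show False
  proof (cases "A m")
    case True
    have "g ` S \<subseteq> ?V - {m}"
      using not_lo True by (auto simp: g_def)
    then have "card S \<le> card (?V - {m})"
      using card_image[OF inj_g] \<open>finite ?V\<close> by (metis card_mono finite_Diff)
    also have "\<dots> < card ?V"
      using \<open>finite ?V\<close> \<open>m \<in> ?V\<close> by (rule card_Diff1_less)
    finally have "card S < card ?V" .
    moreover have "card ?V \<le> card S"
      using descend by (intro card_endpoints_le_card_edges[OF \<open>finite S\<close> _ no_leaf]) fastforce
    ultimately show False by linarith
  next
    case False
    obtain e' where "e' \<in> S" "e' \<noteq> e" "m \<in> {hi e', lo e'}"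
      using no_leaf[OF \<open>e \<in> S\<close>] \<open>m = hi e\<close> by blast
    then have "g e' = g e"
      using not_lo False \<open>m = hi e\<close> by (auto simp: g_def)
    then show False using inj_onD[OF inj_g] \<open>e \<in> S\<close> \<open>e' \<in> S\<close> \<open>e' \<noteq> e\<close> by blast
  qed
qed

lemma incidence_nth:
  "incidence tail head $ a $ e = (if a = tail e then 1 else if a = head e then -1 else 0)"
  by (simp add: incidence_def)

lemma is_path_take:
  assumes "is_path tail head u v q" and "k < length q"
  shows "is_path tail head u (q ! k) (take (Suc k) q)"
proof -
  have "last (take (Suc k) q) = q ! k"
    using assms(2) by (subst last_conv_nth) (auto simp: min_def le_Suc_eq)
  then show ?thesis
    using assms unfolding is_path_def by (auto simp: hd_conv_nth)
qed

lemma matrix_inv_eqI: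
  fixes A B :: "'a::semiring_1^'n^'n"
  assumes "A ** B = mat 1" and "B ** A = mat 1"
  shows "matrix_inv A = B"
proof -
  have inv: "A ** matrix_inv A = mat 1 \<and> matrix_inv A ** A = mat 1"
    unfolding matrix_inv_def by (rule someI[of _ B]) (use assms in simp)
  have "matrix_inv A = matrix_inv A ** (A ** B)" using assms(1) by simp
  also have "\<dots> = B" using inv by (simp add: matrix_mul_assoc)
  finally show ?thesis .
qed

locale weighted_graph =
  fixes tail head :: "'e::finite \<Rightarrow> 'v::finite" and w :: "'e \<Rightarrow> real"
  assumes simple: "simple_graph tail head" and weight_pos: "\<And>e. w e > 0"
begin

definition lipschitz_potential :: "('v \<Rightarrow> real) \<Rightarrow> bool" where
  "lipschitz_potential p \<longleftrightarrow> (\<forall>e. \<bar>p (tail e) - p (head e)\<bar> \<le> w e)"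

definition tight_path :: "('v \<Rightarrow> real) \<Rightarrow> 'v \<Rightarrow> 'v \<Rightarrow> 'v list \<Rightarrow> bool" where
  "tight_path p u v q \<longleftrightarrow> is_path tail head u v q \<and> p u - p v = path_length tail head w q"

lemma tail_neq_head: "tail e \<noteq> head e"
  using simple by (simp add: simple_graph_def)

lemma edge_between_eq: "{tail e, head e} = {a, b} \<Longrightarrow> edge_between tail head a b = e"
  unfolding edge_between_def
  by (rule the_equality) (use simple in \<open>auto simp: simple_graph_def\<close>)

lemma lipschitz_potential_uminus [simp]:
  "lipschitz_potential (\<lambda>v. - p v) \<longleftrightarrow> lipschitz_potential p"
  by (simp add: lipschitz_potential_def abs_minus_commute)

lemma lipschitz_potential_adjacent:
  assumes "lipschitz_potential p" and "adjacent tail head a b"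
  shows "p a - p b \<le> w (edge_between tail head a b)"
proof -
  obtain e where e: "{tail e, head e} = {a, b}"
    using assms(2) unfolding adjacent_def by auto
  have "p a - p b \<le> w e"
    using assms(1) e by (auto simp: lipschitz_potential_def doubleton_eq_iff abs_le_iff)
  then show ?thesis using edge_between_eq[OF e] by simp
qed

lemma potential_drop_le_path_length:
  assumes "lipschitz_potential p" and "is_path tail head u v q"
  shows "p u - p v \<le> path_length tail head w q"
proof -
  have "q \<noteq> []" "hd q = u" "last q = v"
    and adj: "\<forall>i < length q - 1. adjacent tail head (q ! i) (q ! (i + 1))"
    using assms(2) by (auto simp: is_path_def)
  then have "p u - p v = (\<Sum>i<length q - 1. p (q ! i) - p (q ! Suc i))"
    using sum_lessThan_telescope'[of "\<lambda>i. p (q ! i)" "length q - 1"]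
    by (simp add: hd_conv_nth last_conv_nth)
  also have "\<dots> \<le> path_length tail head w q"
    unfolding path_length_def
    by (rule sum_mono) (use lipschitz_potential_adjacent[OF assms(1)] adj in auto)
  finally show ?thesis .
qed

lemma path_length_take_le: "path_length tail head w (take k q) \<le> path_length tail head w q"
proof -
  have "path_length tail head w (take k q)
      = (\<Sum>i<length (take k q) - 1. w (edge_between tail head (q ! i) (q ! (i + 1))))"
    unfolding path_length_def by (rule sum.cong) auto
  also have "\<dots> \<le> path_length tail head w q"
    unfolding path_length_def
    by (rule sum_mono2) (use weight_pos in \<open>auto intro: less_imp_le\<close>)
  finally show ?thesis .
qed

lemma path_length_snoc:
  assumes "q \<noteq> []"
  shows "path_length tail head w (q @ [b])
    = path_length tail head w q + w (edge_between tail head (last q) b)"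
proof -
  obtain n where "length q = Suc n" using assms by (cases q) auto
  then show ?thesis
    unfolding path_length_def by (simp add: nth_append last_conv_nth[OF assms])
qed

lemma tight_path_shortest:
  assumes "lipschitz_potential p" and "tight_path p u v q" and "is_path tail head u v q'"
  shows "path_length tail head w q \<le> path_length tail head w q'"
  using potential_drop_le_path_length[OF assms(1,3)] assms(2) by (simp add: tight_path_def)

lemma tight_path_unique:
  assumes "lipschitz_potential p" and "unique_shortest_path tail head w u v"
    and "tight_path p u v q1" and "tight_path p u v q2"
  shows "q1 = q2"
  using assms tight_path_shortest[OF assms(1)]
  unfolding unique_shortest_path_def tight_path_def by blast

text \<open>A tight path cannot revisit \<open>b\<close>: along it the potential strictly decreases.\<close>

lemma tight_path_snoc:
  assumes lip: "lipschitz_potential p" and tight: "tight_path p u a q"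
    and e: "{tail e, head e} = {a, b}" and drop: "p a - p b = w e"
  shows "tight_path p u b (q @ [b])"
proof -
  have path: "is_path tail head u a q" and len: "p u - p a = path_length tail head w q"
    using tight by (auto simp: tight_path_def)
  then have "q \<noteq> []" "last q = a" by (auto simp: is_path_def)
  have "b \<notin> set q"
  proof
    assume "b \<in> set q"
    then obtain k where "k < length q" "q ! k = b" by (auto simp: in_set_conv_nth)
    then have "p u - p b \<le> path_length tail head w q"
      using potential_drop_le_path_length[OF lip is_path_take[OF path]] path_length_take_le
      by (metis order.trans)
    then show False using len drop weight_pos[of e] by simp
  qed
  moreover have "adjacent tail head ((q @ [b]) ! i) ((q @ [b]) ! (i + 1))"
    if "i < length q" for i
  proof (cases "i < length q - 1")
    case True
    then show ?thesis using path by (auto simp: is_path_def nth_append)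
  next
    case False
    then have "i = length q - 1" using that by simp
    then show ?thesis
      using e \<open>last q = a\<close> \<open>q \<noteq> []\<close> by (auto simp: adjacent_def nth_append last_conv_nth)
  qed
  ultimately have "is_path tail head u b (q @ [b])"
    using path \<open>q \<noteq> []\<close> unfolding is_path_def by auto
  moreover have "p u - p b = path_length tail head w (q @ [b])"
    using path_length_snoc[OF \<open>q \<noteq> []\<close>] edge_between_eq[OF e] \<open>last q = a\<close> len drop by simp
  ultimately show ?thesis by (simp add: tight_path_def)
qed

lemma tight_parent_unique:
  assumes lip: "lipschitz_potential p" and shortest: "unique_shortest_path tail head w u v"
    and "\<exists>q. tight_path p u a q" "{tail e, head e} = {a, v}" "p a - p v = w e"
    and "\<exists>q. tight_path p u a' q" "{tail e', head e'} = {a', v}" "p a' - p v = w e'"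
  shows "a = a'"
proof -
  obtain q q' where q: "tight_path p u a q" and q': "tight_path p u a' q'"
    using assms(3,6) by blast
  have "q @ [v] = q' @ [v]"
    using tight_path_unique[OF lip shortest tight_path_snoc[OF lip q assms(4,5)]
        tight_path_snoc[OF lip q' assms(7,8)]] .
  then show ?thesis
    using q q' by (auto simp: tight_path_def is_path_def)
qed

definition tight_on_support :: "('v \<Rightarrow> real) \<Rightarrow> real^'e \<Rightarrow> bool" where
  "tight_on_support p \<gamma> \<longleftrightarrow> (\<forall>e. \<gamma> $ e \<noteq> 0 \<longrightarrow> p (tail e) - p (head e) = w e * sgn (\<gamma> $ e))"

definition kkt_flow :: "'v \<Rightarrow> 'v \<Rightarrow> real \<Rightarrow> ('v \<Rightarrow> real) \<Rightarrow> real^'e \<Rightarrow> bool" where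
  "kkt_flow s t lam p \<gamma> \<longleftrightarrow> lipschitz_potential p \<and> tight_on_support p \<gamma> \<and>
     (\<forall>a. (incidence tail head *v \<gamma>) $ a = st_vector s t $ a - lam * p a)"

lemma tight_on_support_uminus [simp]:
  "tight_on_support (\<lambda>v. - p v) (- \<gamma>) \<longleftrightarrow> tight_on_support p \<gamma>"
  by (auto simp: tight_on_support_def sgn_minus)

lemma kkt_flow_swap:
  assumes "kkt_flow s t lam p \<gamma>" and "s \<noteq> t"
  shows "kkt_flow t s lam (\<lambda>v. - p v) (- \<gamma>)"
  using assms
  by (auto simp: kkt_flow_def st_vector_def matrix_vector_mult_def sum_negf)

lemma flow_leaves_along_tight_edge:
  assumes "tight_on_support p \<gamma>" and "incidence tail head $ a $ e * \<gamma> $ e > 0"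
  obtains b where "{tail e, head e} = {a, b}" "p a - p b = w e"
    "incidence tail head $ b $ e * \<gamma> $ e < 0"
proof -
  have "\<gamma> $ e \<noteq> 0" using assms(2) by auto
  then have tight: "p (tail e) - p (head e) = w e * sgn (\<gamma> $ e)"
    using assms(1) by (simp add: tight_on_support_def)
  show ?thesis
  proof (cases "a = tail e")
    case True
    then have "\<gamma> $ e > 0" using assms(2) by (simp add: incidence_nth)
    then show ?thesis
      using that[of "head e"] True tight tail_neq_head[of e] by (simp add: incidence_nth)
  next
    case False
    then have "a = head e" "\<gamma> $ e < 0"
      using assms(2) by (auto simp: incidence_nth split: if_splits)
    then show ?thesis
      using that[of "tail e"] tight tail_neq_head[of e] by (auto simp: incidence_nth insert_commute)
  qed
qed

lemma kkt_flow_tight_predecessor: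
  assumes kkt: "kkt_flow s t lam p \<gamma>" and "lam \<ge> 0" and "a \<noteq> s" and "p a \<ge> 0"
    and leaves: "incidence tail head $ a $ e * \<gamma> $ e > 0"
  obtains c e' where "{tail e', head e'} = {c, a}" "p c - p a = w e'"
    "incidence tail head $ c $ e' * \<gamma> $ e' > 0"
proof -
  have "(\<Sum>e\<in>UNIV. incidence tail head $ a $ e * \<gamma> $ e) = st_vector s t $ a - lam * p a"
    using kkt by (simp add: kkt_flow_def matrix_vector_mult_def)
  moreover have "st_vector s t $ a \<le> 0" using \<open>a \<noteq> s\<close> by (simp add: st_vector_def)
  moreover have "lam * p a \<ge> 0" using \<open>lam \<ge> 0\<close> \<open>p a \<ge> 0\<close> by simp
  ultimately have out_le: "(\<Sum>e\<in>UNIV. incidence tail head $ a $ e * \<gamma> $ e) \<le> 0"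
    by linarith
  have "\<exists>e'. incidence tail head $ a $ e' * \<gamma> $ e' < 0"
  proof (rule ccontr)
    assume "\<nexists>e'. incidence tail head $ a $ e' * \<gamma> $ e' < 0"
    then have "incidence tail head $ a $ e * \<gamma> $ e \<le> (\<Sum>e\<in>UNIV. incidence tail head $ a $ e * \<gamma> $ e)"
      by (intro member_le_sum) (auto simp: not_less)
    then show False using out_le leaves by simp
  qed
  then obtain e' where "incidence tail head $ a $ e' * (- \<gamma>) $ e' > 0" by auto
  moreover have "tight_on_support (\<lambda>v. - p v) (- \<gamma>)" using kkt by (simp add: kkt_flow_def)
  ultimately obtain c where "{tail e', head e'} = {a, c}" "p c - p a = w e'"
    "incidence tail head $ c $ e' * \<gamma> $ e' > 0"
    by (elim flow_leaves_along_tight_edge) auto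
  then show ?thesis using that[of e' c] by (simp add: insert_commute)
qed

text \<open>Following flow backwards along tight edges climbs strictly in \<open>p\<close>, so it can only stop
  at \<open>s\<close>.\<close>

lemma tight_path_from_source:
  assumes kkt: "kkt_flow s t lam p \<gamma>" and "lam \<ge> 0"
  shows "incidence tail head $ a $ e * \<gamma> $ e > 0 \<Longrightarrow> p a \<ge> 0 \<Longrightarrow> \<exists>q. tight_path p s a q"
proof (induction a arbitrary: e rule: measure_induct_rule[where f = "\<lambda>a. card {v. p v > p a}"])
  case (less a)
  show ?case
  proof (cases "a = s")
    case True
    then show ?thesis
      by (intro exI[of _ "[s]"]) (simp add: tight_path_def is_path_def path_length_def)
  next
    case False
    obtain c e' where c: "{tail e', head e'} = {c, a}" "p c - p a = w e'"
      "incidence tail head $ c $ e' * \<gamma> $ e' > 0"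
      using kkt_flow_tight_predecessor[OF kkt \<open>lam \<ge> 0\<close> False less.prems(2,1)] .
    have "p a < p c" using c(2) weight_pos[of e'] by linarith
    then have "{v. p v > p c} \<subseteq> {v. p v > p a}" "c \<in> {v. p v > p a} - {v. p v > p c}"
      by auto
    then have "{v. p v > p c} \<subset> {v. p v > p a}" by blast
    then have "card {v. p v > p c} < card {v. p v > p a}"
      by (rule psubset_card_mono[OF finite])
    moreover have "p c \<ge> 0" using \<open>p a < p c\<close> less.prems(2) by linarith
    ultimately obtain q where "tight_path p s c q"
      using less.IH c(3) by blast
    moreover have "lipschitz_potential p" using kkt by (simp add: kkt_flow_def)
    ultimately show ?thesis
      using tight_path_snoc c(1,2) by blast
  qed
qed

lemma circulation_support_no_leaf:
  assumes "incidence tail head *v \<delta> = 0" and "\<delta> $ e \<noteq> 0" and "v \<in> {tail e, head e}"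
  shows "\<exists>e'. e' \<noteq> e \<and> \<delta> $ e' \<noteq> 0 \<and> v \<in> {tail e', head e'}"
proof (rule ccontr)
  assume none: "\<not> ?thesis"
  let ?f = "\<lambda>e'. incidence tail head $ v $ e' * \<delta> $ e'"
  have "(incidence tail head *v \<delta>) $ v = ?f e + (\<Sum>e'\<in>UNIV - {e}. ?f e')"
    unfolding matrix_vector_mult_def by (simp add: sum.remove)
  also have "(\<Sum>e'\<in>UNIV - {e}. ?f e') = 0"
    using none by (intro sum.neutral) (auto simp: incidence_nth)
  finally have "?f e = 0" using assms(1) by simp
  then show False
    using assms(2,3) tail_neq_head[of e] by (auto simp: incidence_nth)
qed

lemma kkt_flows_difference_no_leaf:
  assumes "kkt_flow s t lam p \<gamma>1" and "kkt_flow s t lam p \<gamma>2"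
    and "\<gamma>1 $ e \<noteq> \<gamma>2 $ e" and "v \<in> {tail e, head e}"
  shows "\<exists>e'. e' \<noteq> e \<and> \<gamma>1 $ e' \<noteq> \<gamma>2 $ e' \<and> v \<in> {tail e', head e'}"
proof -
  have "incidence tail head *v (\<gamma>1 - \<gamma>2) = 0"
    using assms(1,2) by (simp add: kkt_flow_def vec_eq_iff matrix_vector_mult_diff_distrib)
  then show ?thesis
    using circulation_support_no_leaf[of "\<gamma>1 - \<gamma>2" e v] assms(3,4) by simp
qed

definition upper_end :: "('v \<Rightarrow> real) \<Rightarrow> 'e \<Rightarrow> 'v" where
  "upper_end p e = (if p (head e) < p (tail e) then tail e else head e)"

definition lower_end :: "('v \<Rightarrow> real) \<Rightarrow> 'e \<Rightarrow> 'v" where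
  "lower_end p e = (if p (head e) < p (tail e) then head e else tail e)"

lemma kkt_flow_support_edge:
  assumes kkt: "kkt_flow s t lam p \<gamma>" and "\<gamma> $ e \<noteq> 0"
  shows "{tail e, head e} = {upper_end p e, lower_end p e}"
    and "p (upper_end p e) - p (lower_end p e) = w e"
    and "incidence tail head $ upper_end p e $ e * \<gamma> $ e > 0"
    and "incidence tail head $ lower_end p e $ e * \<gamma> $ e < 0"
proof -
  define a where "a = (if \<gamma> $ e > 0 then tail e else head e)"
  have "incidence tail head $ a $ e * \<gamma> $ e > 0"
    using \<open>\<gamma> $ e \<noteq> 0\<close> tail_neq_head[of e] by (auto simp: a_def incidence_nth mult_neg_neg)
  moreover have "tight_on_support p \<gamma>" using kkt by (simp add: kkt_flow_def)
  ultimately obtain b where b: "{tail e, head e} = {a, b}" "p a - p b = w e"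
    "incidence tail head $ b $ e * \<gamma> $ e < 0"
    by (elim flow_leaves_along_tight_edge)
  moreover have "upper_end p e = a" "lower_end p e = b"
    using b(1,2) weight_pos[of e] by (auto simp: upper_end_def lower_end_def doubleton_eq_iff)
  ultimately show "{tail e, head e} = {upper_end p e, lower_end p e}"
    and "p (upper_end p e) - p (lower_end p e) = w e"
    and "incidence tail head $ upper_end p e $ e * \<gamma> $ e > 0"
    and "incidence tail head $ lower_end p e $ e * \<gamma> $ e < 0"
    using \<open>incidence tail head $ a $ e * \<gamma> $ e > 0\<close> by simp_all
qed

lemma kkt_flow_support_reached:
  assumes kkt: "kkt_flow s t lam p \<gamma>" and "\<gamma> $ e \<noteq> 0" and "s \<noteq> t" and "lam \<ge> 0"
  shows "(\<exists>q. tight_path p s (upper_end p e) q) \<or> (\<exists>q. tight_path (\<lambda>v. - p v) t (lower_end p e) q)"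
proof (cases "p (upper_end p e) \<ge> 0")
  case True
  then show ?thesis
    using tight_path_from_source[OF kkt \<open>lam \<ge> 0\<close>] kkt_flow_support_edge(3)[OF kkt \<open>\<gamma> $ e \<noteq> 0\<close>]
    by blast
next
  case False
  then have "- p (lower_end p e) \<ge> 0"
    using kkt_flow_support_edge(2)[OF kkt \<open>\<gamma> $ e \<noteq> 0\<close>] weight_pos[of e] by linarith
  moreover have "incidence tail head $ lower_end p e $ e * (- \<gamma>) $ e > 0"
    using kkt_flow_support_edge(4)[OF kkt \<open>\<gamma> $ e \<noteq> 0\<close>] by simp
  ultimately show ?thesis
    using tight_path_from_source[OF kkt_flow_swap[OF kkt \<open>s \<noteq> t\<close>] \<open>lam \<ge> 0\<close>] by blast
qed

lemma kkt_flow_unique: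
  assumes shortest: "\<And>v. unique_shortest_path tail head w s v \<and> unique_shortest_path tail head w t v"
    and "s \<noteq> t" and "lam \<ge> 0"
    and kkt1: "kkt_flow s t lam p \<gamma>1" and kkt2: "kkt_flow s t lam p \<gamma>2"
  shows "\<gamma>1 = \<gamma>2"
proof -
  define S where "S = {e. \<gamma>1 $ e \<noteq> \<gamma>2 $ e}"
  let ?hi = "upper_end p" and ?lo = "lower_end p"
  let ?A = "\<lambda>v. \<exists>q. tight_path p s v q" and ?B = "\<lambda>v. \<exists>q. tight_path (\<lambda>v. - p v) t v q"
  have lip: "lipschitz_potential p" using kkt1 by (simp add: kkt_flow_def)
  have support: "\<exists>\<gamma>. kkt_flow s t lam p \<gamma> \<and> \<gamma> $ e \<noteq> 0" if "e \<in> S" for e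
    using that kkt1 kkt2 by (cases "\<gamma>1 $ e = 0") (auto simp: S_def)
  have ends: "{tail e, head e} = {?hi e, ?lo e}" and drop: "p (?hi e) - p (?lo e) = w e"
    if "e \<in> S" for e
    using support[OF that] kkt_flow_support_edge(1,2) by blast+
  have "S = {}"
  proof (rule descending_edge_set_empty[where p = p and A = ?A and B = ?B])
    show "finite S" by simp
    show "e = e'" if "e \<in> S" "e' \<in> S" "?hi e = ?hi e'" "?lo e = ?lo e'" for e e'
      using ends[OF that(1)] ends[OF that(2)] that(3,4) simple by (simp add: simple_graph_def)
    show "p (?lo e) < p (?hi e)" if "e \<in> S" for e
      using drop[OF that] weight_pos[of e] by simp
    show "\<exists>e'\<in>S. e' \<noteq> e \<and> v \<in> {?hi e', ?lo e'}" if e: "e \<in> S" and v: "v \<in> {?hi e, ?lo e}" for e v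
    proof -
      have "v \<in> {tail e, head e}" using v ends[OF e] by simp
      then obtain e' where "e' \<noteq> e" "e' \<in> S" "v \<in> {tail e', head e'}"
        using kkt_flows_difference_no_leaf[OF kkt1 kkt2] e by (simp add: S_def) blast
      then show ?thesis using ends[OF \<open>e' \<in> S\<close>] by blast
    qed
    show "?A (?hi e) \<or> ?B (?lo e)" if "e \<in> S" for e
      using support[OF that] kkt_flow_support_reached \<open>s \<noteq> t\<close> \<open>lam \<ge> 0\<close> by blast
    show "?A (?lo e)" if "e \<in> S" "?A (?hi e)" for e
      using that(2) tight_path_snoc[OF lip _ ends[OF that(1)] drop[OF that(1)]] by blast
    show "?hi e = ?hi e'"
      if e: "e \<in> S" and e': "e' \<in> S" and "?A (?hi e)" "?A (?hi e')" and eq: "?lo e = ?lo e'"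
      for e e'
      using tight_parent_unique[OF lip conjunct1[OF shortest] \<open>?A (?hi e)\<close> ends[OF e] drop[OF e]
          \<open>?A (?hi e')\<close>] ends[OF e'] drop[OF e'] eq
      by simp
    show "?lo e = ?lo e'"
      if e: "e \<in> S" and e': "e' \<in> S" and "?B (?lo e)" "?B (?lo e')" and eq: "?hi e = ?hi e'"
      for e e'
    proof (rule tight_parent_unique[OF _ conjunct2[OF shortest] \<open>?B (?lo e)\<close> _ _ \<open>?B (?lo e')\<close>])
      show "lipschitz_potential (\<lambda>v. - p v)" using lip by simp
      show "{tail e, head e} = {?lo e, ?hi e}" "{tail e', head e'} = {?lo e', ?hi e}"
        using ends[OF e] ends[OF e'] eq by (simp_all add: insert_commute)
      show "- p (?lo e) - - p (?hi e) = w e" "- p (?lo e') - - p (?hi e) = w e'"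
        using drop[OF e] drop[OF e'] eq by simp_all
    qed
  qed
  then show ?thesis by (simp add: S_def vec_eq_iff)
qed

lemma matrix_inv_weight_matrix:
  "matrix_inv (weight_matrix w) = (\<chi> i j. if i = j then 1 / w j else 0)"
proof (rule matrix_inv_eqI)
  have "w j \<noteq> 0" for j using weight_pos[of j] by simp
  then show "weight_matrix w ** (\<chi> i j. if i = j then 1 / w j else 0) = mat 1"
    and "(\<chi> i j. if i = j then 1 / w j else 0) ** weight_matrix w = mat 1"
    by (simp_all add: matrix_matrix_mult_def weight_matrix_def mat_def vec_eq_iff
        if_distrib[of "\<lambda>x. x * _"] cong: if_cong)
qed

lemma weighted_incidence_nth:
  "(incidence tail head ** matrix_inv (weight_matrix w)) $ v $ e = incidence tail head $ v $ e / w e"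
  unfolding matrix_inv_weight_matrix matrix_matrix_mult_def
  by (simp add: if_distrib[of "\<lambda>x. _ * x"] cong: if_cong)

lemma weighted_incidence_mult:
  "(incidence tail head ** matrix_inv (weight_matrix w)) *v \<beta> = incidence tail head *v (\<chi> e. \<beta> $ e / w e)"
  by (simp add: matrix_vector_mult_def weighted_incidence_nth vec_eq_iff)

lemma inner_column_weighted_incidence:
  "r \<bullet> column e (incidence tail head ** matrix_inv (weight_matrix w)) = (r $ tail e - r $ head e) / w e"
proof -
  have "r \<bullet> column e (incidence tail head ** matrix_inv (weight_matrix w))
      = (\<Sum>v\<in>UNIV. (if v = tail e then r $ v / w e else 0) - (if v = head e then r $ v / w e else 0))"
    unfolding inner_vec_def column_def
    by (rule sum.cong) (use tail_neq_head[of e] in \<open>auto simp: weighted_incidence_nth incidence_nth\<close>)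
  also have "\<dots> = (r $ tail e - r $ head e) / w e"
    by (simp add: sum_subtractf diff_divide_distrib)
  finally show ?thesis .
qed

lemma lasso_minimizer_kkt_flow:
  defines "Q \<equiv> incidence tail head ** matrix_inv (weight_matrix w)"
  assumes "lam > 0" and min: "lasso_minimizer (st_vector s t) Q lam \<beta>"
  shows "kkt_flow s t lam (\<lambda>v. (st_vector s t - Q *v \<beta>) $ v / lam) (\<chi> e. \<beta> $ e / w e)"
proof -
  let ?r = "st_vector s t - Q *v \<beta>"
  have kkt: "\<bar>(?r $ tail e - ?r $ head e) / w e\<bar> \<le> lam \<and>
      (\<beta> $ e \<noteq> 0 \<longrightarrow> (?r $ tail e - ?r $ head e) / w e = lam * sgn (\<beta> $ e))" for e
    using lasso_minimizer_optimality[of lam _ Q \<beta> e] \<open>lam > 0\<close> min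
    by (simp add: Q_def inner_column_weighted_incidence)
  have "\<bar>?r $ tail e / lam - ?r $ head e / lam\<bar> \<le> w e" for e
    using kkt[of e] \<open>lam > 0\<close> weight_pos[of e]
    by (simp add: abs_divide field_simps diff_divide_distrib[symmetric])
  moreover have "?r $ tail e / lam - ?r $ head e / lam = w e * sgn (\<beta> $ e / w e)" if "\<beta> $ e \<noteq> 0" for e
    using kkt[of e] that \<open>lam > 0\<close> weight_pos[of e]
    by (simp add: sgn_divide field_simps diff_divide_distrib[symmetric])
  moreover have "(incidence tail head *v (\<chi> e. \<beta> $ e / w e)) $ a = st_vector s t $ a - lam * (?r $ a / lam)" for a
    using \<open>lam > 0\<close> by (simp add: Q_def weighted_incidence_mult)
  ultimately show ?thesis
    by (simp add: kkt_flow_def lipschitz_potential_def tight_on_support_def)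
qed

end

theorem lemma3p2:
  fixes tail head :: "'e::finite \<Rightarrow> 'v::finite"
    and w :: "'e \<Rightarrow> real"
    and s t :: 'v
    and lam :: real
  assumes simple: "simple_graph tail head"
    and conn: "connected_graph tail head"
    and wpos: "\<forall>e. w e > 0"
    and st: "s \<noteq> t"
    and A1: "\<forall>v. unique_shortest_path tail head w s v \<and> unique_shortest_path tail head w t v"
    and lam: "lam > 0"
  shows "\<exists>!\<beta>. \<forall>\<beta>'. lasso_obj (st_vector s t) (incidence tail head ** matrix_inv (weight_matrix w)) lam \<beta>
                 \<le> lasso_obj (st_vector s t) (incidence tail head ** matrix_inv (weight_matrix w)) lam \<beta>'"
proof -
  interpret weighted_graph tail head w
    using simple wpos by unfold_locales auto
  let ?Q = "incidence tail head ** matrix_inv (weight_matrix w)"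
  obtain \<beta> where min: "lasso_minimizer (st_vector s t) ?Q lam \<beta>"
    using lasso_minimizer_exists[OF lam] by blast
  moreover have "\<beta>' = \<beta>" if min': "lasso_minimizer (st_vector s t) ?Q lam \<beta>'" for \<beta>'
  proof -
    have "?Q *v \<beta>' = ?Q *v \<beta>"
      using lasso_minimizers_same_residual[OF less_imp_le[OF lam] min' min] .
    let ?p = "\<lambda>v. (st_vector s t - ?Q *v \<beta>) $ v / lam"
    have "kkt_flow s t lam ?p (\<chi> e. \<beta>' $ e / w e)"
      using lasso_minimizer_kkt_flow[OF lam min'] \<open>?Q *v \<beta>' = ?Q *v \<beta>\<close> by simp
    moreover have "kkt_flow s t lam ?p (\<chi> e. \<beta> $ e / w e)"
      using lasso_minimizer_kkt_flow[OF lam min] .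
    ultimately have "(\<chi> e. \<beta>' $ e / w e) = (\<chi> e. \<beta> $ e / w e)"
      using kkt_flow_unique[OF _ st less_imp_le[OF lam]] A1 by blast
    then show ?thesis
      using weight_pos by (simp add: vec_eq_iff) (metis divide_cancel_right less_irrefl)
  qed
  ultimately show ?thesis unfolding lasso_minimizer_def by blast
qed

end
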